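(* Let $a,b,\sigma$ be real numbers with $\sigma>0$, $0<b<1$, $b-1\le a<b$, and $\sigma<1-a+b$. Then every real solution of $$x_{n+1}=ax_n+b(b-a)x_{n-1}+\sigma\tanh(x_n-bx_{n-1}),\quad n\ge0,$$ converges to $0$.
   Context: Solutions are generated by iteration from arbitrary real initial values $x_0,x_{-1}$. *)

theory Defs
  imports "HOL-Analysis.Analysis"
begin

end

theory Submission
  imports Defs
begin

(* Put y n = x (n+1) - b * x n and c = a - b.  The second-order recurrence
   factors into the first-order recurrence  y (n+1) = c * y n + \<sigma> * tanh (y n)  and the
   perturbed linear recurrence  x (n+1) = b * x n + y n.
   The hypotheses give -1 \<le> c < 0 and c + \<sigma> < 1.  On the interval |z| \<le> M the slope
   tanh z / z lies between 1 - tanh M^2 and 1, so the odd map z \<mapsto> c z + \<sigma> tanh z is a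
   contraction towards 0 there, with factor  max (c + \<sigma>) (-(c + \<sigma>(1 - tanh M^2))) < 1.
   Since the orbit of y never leaves |z| \<le> |y 0|, it decays geometrically.  Finally a
   stable linear recurrence (0 < b < 1) driven by a geometrically decaying input is itself
   dominated by a geometric sequence, hence x tends to 0.
   The file proves the two tanh estimates, the contraction estimate, the geometric decay
   of a locally contracting orbit, the decay of the perturbed linear recurrence, and then
   combines them. *)

text \<open>On the nonnegative axis tanh lies below the identity (its slope is at most 1).\<close>
lemma tanh_le_self:
  fixes t :: real
  assumes "0 \<le> t"
  shows "tanh t \<le> t"
proof -
  have "(\<lambda>s. s - tanh s) 0 \<le> (\<lambda>s. s - tanh s) t"
  proof (rule deriv_nonneg_imp_mono[where g = "\<lambda>s. s - tanh s" and g' = "\<lambda>s. tanh s ^ 2"])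
    fix s :: real assume "s \<in> {0..t}"
    show "((\<lambda>s. s - tanh s) has_real_derivative tanh s ^ 2) (at s)"
      by (auto intro!: derivative_eq_intros simp: cosh_real_pos[THEN less_imp_neq, symmetric])
  qed (use assms in auto)
  then show ?thesis by simp
qed

text \<open>On [0, M] tanh lies above the line of slope 1 - tanh M^2, the smallest value
  of its derivative on that interval.\<close>
lemma tanh_ge_min_slope:
  fixes t M :: real
  assumes "0 \<le> t" and "t \<le> M"
  shows "(1 - tanh M ^ 2) * t \<le> tanh t"
proof -
  define k where "k = 1 - tanh M ^ 2"
  have "(\<lambda>s. tanh s - k * s) 0 \<le> (\<lambda>s. tanh s - k * s) t"
  proof (rule deriv_nonneg_imp_mono[where g = "\<lambda>s. tanh s - k * s" and g' = "\<lambda>s. 1 - tanh s ^ 2 - k"])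
    fix s :: real assume "s \<in> {0..t}"
    show "((\<lambda>s. tanh s - k * s) has_real_derivative 1 - tanh s ^ 2 - k) (at s)"
      by (auto intro!: derivative_eq_intros simp: cosh_real_pos[THEN less_imp_neq, symmetric])
  next
    fix s :: real assume "s \<in> {0..t}"
    then have "0 \<le> tanh s" and "tanh s \<le> tanh M" using assms by auto
    then have "tanh s ^ 2 \<le> tanh M ^ 2" by (simp add: power_mono)
    then show "0 \<le> 1 - tanh s ^ 2 - k" by (simp add: k_def)
  qed (use assms in auto)
  then show ?thesis by (simp add: k_def)
qed

definition tanh_contraction_factor :: "real \<Rightarrow> real \<Rightarrow> real \<Rightarrow> real" where
  "tanh_contraction_factor c \<sigma> M = max (c + \<sigma>) (- (c + \<sigma> * (1 - tanh M ^ 2)))"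

lemma tanh_contraction_factor_bounds:
  fixes c \<sigma> M :: real
  assumes "\<sigma> > 0" and "-1 \<le> c" and "c + \<sigma> < 1"
  shows "0 \<le> tanh_contraction_factor c \<sigma> M" and "tanh_contraction_factor c \<sigma> M < 1"
proof -
  have "tanh M ^ 2 < 1"
    using tanh_real_lt_1[of M] tanh_real_gt_neg1[of M] by (simp add: power2_less_1_iff abs_less_iff)
  then have "0 < \<sigma> * (1 - tanh M ^ 2)" using assms by simp
  then show "tanh_contraction_factor c \<sigma> M < 1"
    using assms unfolding tanh_contraction_factor_def by simp
  have "0 \<le> \<sigma> * tanh M ^ 2" using assms by simp
  then show "0 \<le> tanh_contraction_factor c \<sigma> M"
    unfolding tanh_contraction_factor_def by (simp add: algebra_simps)
qed

text \<open>The contraction estimate: for 0 \<le> z \<le> M the value c z + \<sigma> tanh z lies between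
  (c + \<sigma>(1 - tanh M^2)) z and (c + \<sigma>) z; the map is odd, so negative z follow.\<close>
lemma tanh_map_contraction:
  fixes c \<sigma> M z :: real
  assumes "\<sigma> > 0" and "\<bar>z\<bar> \<le> M"
  shows "\<bar>c * z + \<sigma> * tanh z\<bar> \<le> tanh_contraction_factor c \<sigma> M * \<bar>z\<bar>"
proof -
  define \<rho> where "\<rho> = tanh_contraction_factor c \<sigma> M"
  have nonneg_case: "\<bar>c * t + \<sigma> * tanh t\<bar> \<le> \<rho> * t" if "0 \<le> t" and "t \<le> M" for t
  proof -
    have "c * t + \<sigma> * tanh t \<le> (c + \<sigma>) * t"
      using tanh_le_self[OF \<open>0 \<le> t\<close>] \<open>\<sigma> > 0\<close> by (simp add: algebra_simps)
    moreover have "(c + \<sigma> * (1 - tanh M ^ 2)) * t \<le> c * t + \<sigma> * tanh t"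
      using mult_left_mono[OF tanh_ge_min_slope[OF that], of \<sigma>] \<open>\<sigma> > 0\<close>
      by (simp add: algebra_simps)
    moreover have "(c + \<sigma>) * t \<le> \<rho> * t" and "- (c + \<sigma> * (1 - tanh M ^ 2)) * t \<le> \<rho> * t"
      using \<open>0 \<le> t\<close> by (auto intro!: mult_right_mono simp: \<rho>_def tanh_contraction_factor_def)
    ultimately show ?thesis by linarith
  qed
  show ?thesis
  proof (cases "z \<ge> 0")
    case True
    then show ?thesis using nonneg_case[of z] assms(2) by (simp add: \<rho>_def)
  next
    case False
    then have "\<bar>c * (- z) + \<sigma> * tanh (- z)\<bar> \<le> \<rho> * (- z)"
      using nonneg_case[of "- z"] assms(2) by simp
    then show ?thesis using False by (simp add: \<rho>_def abs_minus_commute algebra_simps)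
  qed
qed

lemma local_contraction_orbit_decay:
  fixes f :: "real \<Rightarrow> real" and y :: "nat \<Rightarrow> real" and \<rho> M :: real
  assumes "0 \<le> \<rho>" and "\<rho> \<le> 1"
    and contraction: "\<And>z. \<bar>z\<bar> \<le> M \<Longrightarrow> \<bar>f z\<bar> \<le> \<rho> * \<bar>z\<bar>"
    and orbit: "\<And>n. y (Suc n) = f (y n)"
    and start: "\<bar>y 0\<bar> \<le> M"
  shows "\<bar>y n\<bar> \<le> \<rho> ^ n * \<bar>y 0\<bar>"
proof (induction n)
  case 0
  then show ?case by simp
next
  case (Suc n)
  have "\<rho> ^ n * \<bar>y 0\<bar> \<le> \<bar>y 0\<bar>"
    using assms(1,2) by (simp add: mult_left_le_one_le power_le_one)
  then have "\<bar>y n\<bar> \<le> M" using Suc.IH start by linarith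
  then have "\<bar>y (Suc n)\<bar> \<le> \<rho> * \<bar>y n\<bar>" using contraction orbit by simp
  also have "\<dots> \<le> \<rho> * (\<rho> ^ n * \<bar>y 0\<bar>)" using Suc.IH assms(1) by (rule mult_left_mono)
  finally show ?case by simp
qed

text \<open>A stable first-order linear recurrence x (n+1) = b x n + y n (0 \<le> b < 1) driven
  by an input bounded by K \<rho>^n with \<rho> < 1 is dominated by C r^n for every r in
  (max \<rho> b, 1), and therefore tends to 0.\<close>
lemma perturbed_linear_recurrence_tendsto_zero:
  fixes x y :: "nat \<Rightarrow> real" and b \<rho> K :: real
  assumes "0 \<le> b" and "b < 1" and "0 \<le> \<rho>" and "\<rho> < 1" and "0 \<le> K"
    and step: "\<And>n. x (Suc n) = b * x n + y n"
    and input: "\<And>n. \<bar>y n\<bar> \<le> K * \<rho> ^ n"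
  shows "x \<longlonglongrightarrow> 0"
proof -
  define r where "r = (1 + max \<rho> b) / 2"
  have r: "\<rho> \<le> r" "b < r" "r < 1" using assms by (auto simp: r_def)
  define C where "C = max \<bar>x 0\<bar> (K / (r - b))"
  have "K / (r - b) \<le> C" by (simp add: C_def)
  then have K_le: "K \<le> C * (r - b)"
    using r by (simp add: pos_divide_le_eq)
  have dominated: "\<bar>x n\<bar> \<le> C * r ^ n" for n
  proof (induction n)
    case 0
    then show ?case by (simp add: C_def)
  next
    case (Suc n)
    have "\<rho> ^ n \<le> r ^ n" using r assms(3) by (simp add: power_mono)
    then have "K * \<rho> ^ n \<le> K * r ^ n" using assms(5) by (rule mult_left_mono)
    then have input_n: "\<bar>y n\<bar> \<le> K * r ^ n" using input[of n] by linarith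
    have "\<bar>x (Suc n)\<bar> \<le> b * \<bar>x n\<bar> + \<bar>y n\<bar>"
      using step[of n] assms(1) abs_triangle_ineq[of "b * x n" "y n"] by (simp add: abs_mult)
    also have "\<dots> \<le> b * (C * r ^ n) + K * r ^ n"
      using mult_left_mono[OF Suc.IH assms(1)] input_n by linarith
    also have "\<dots> \<le> b * (C * r ^ n) + C * (r - b) * r ^ n"
      using mult_right_mono[OF K_le, of "r ^ n"] r assms(3) by simp
    also have "\<dots> = C * r ^ Suc n" by (simp add: algebra_simps)
    finally show ?case .
  qed
  have "(\<lambda>n. C * r ^ n) \<longlonglongrightarrow> 0"
    using r assms(3) by (auto intro!: tendsto_mult_right_zero LIMSEQ_power_zero)
  moreover have "\<forall>\<^sub>F n in sequentially. norm (x n) \<le> C * r ^ n"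
    using dominated by simp
  ultimately show ?thesis
    by (rule Lim_null_comparison[rotated])
qed

theorem mainTheorem10:
  fixes a b \<sigma> :: real and x :: "nat \<Rightarrow> real"
  assumes "\<sigma> > 0" and "0 < b" and "b < 1" and "b - 1 \<le> a" and "a < b"
    and "\<sigma> < 1 - a + b"
    and rec: "\<And>n. x (n + 2) = a * x (n + 1) + b * (b - a) * x n + \<sigma> * tanh (x (n + 1) - b * x n)"
  shows "x \<longlonglongrightarrow> 0"
proof -
  define c where "c = a - b"
  define y where "y n = x (Suc n) - b * x n" for n
  have y_step: "y (Suc n) = c * y n + \<sigma> * tanh (y n)" for n
    using rec[of n] by (simp add: y_def c_def algebra_simps numeral_2_eq_2)
  have x_step: "x (Suc n) = b * x n + y n" for n
    by (simp add: y_def)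
  define \<rho> where "\<rho> = tanh_contraction_factor c \<sigma> \<bar>y 0\<bar>"
  have c: "-1 \<le> c" "c + \<sigma> < 1" using assms by (auto simp: c_def)
  note \<rho>_bounds = tanh_contraction_factor_bounds[OF \<open>\<sigma> > 0\<close> c, of "\<bar>y 0\<bar>", folded \<rho>_def]
  have y_decay: "\<bar>y n\<bar> \<le> \<bar>y 0\<bar> * \<rho> ^ n" for n
  proof -
    have "\<bar>y n\<bar> \<le> \<rho> ^ n * \<bar>y 0\<bar>"
    proof (rule local_contraction_orbit_decay[where f = "\<lambda>z. c * z + \<sigma> * tanh z"])
      show "\<bar>c * z + \<sigma> * tanh z\<bar> \<le> \<rho> * \<bar>z\<bar>" if "\<bar>z\<bar> \<le> \<bar>y 0\<bar>" for z
        unfolding \<rho>_def using tanh_map_contraction[OF \<open>\<sigma> > 0\<close> that] .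
    qed (use \<rho>_bounds y_step in auto)
    then show ?thesis by (simp add: mult.commute)
  qed
  show ?thesis
    using \<open>0 < b\<close> \<open>b < 1\<close> \<rho>_bounds x_step y_decay
    by (intro perturbed_linear_recurrence_tendsto_zero[where K = "\<bar>y 0\<bar>" and \<rho> = \<rho>]) auto
qed

end
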